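(* Let $V=\{(a_1,a_2,\ldots)\mid a_i\in\mathbb{C},\ \sum_i|a_i|^2<\infty\}$ with quadratic form $f((a_i))=\sum_i a_i^2$ and associated bilinear form $f(u,v)=f(u+v)-f(u)-f(v)$, and let $Cl(V,f)$ be its Clifford algebra. For $v\in V$ let $v^{\perp}=\{v'\in V\mid f(v,v')=0\}$ and let $C(v)=\{a\in Cl(V,f)\mid va=av\}$. (A) If $v\in V$ and $f(v)=1$, then $C(v)=v\,Cl(v^{\perp},f)_{\bar0}+Cl(v^{\perp},f)_{\bar0}$. (B) Let $n$ be odd and, for $1\le i\le n$, let $v_i\in V$ be the sequence with $1$ in position $i$ and $0$ elsewhere. Then $$C(v_1)\cap\cdots\cap C(v_n)=v_1v_2\cdots v_n\,Cl(v_1^{\perp}\cap\cdots\cap v_n^{\perp},f)_{\bar0}+Cl(v_1^{\perp}\cap\cdots\cap v_n^{\perp},f)_{\bar0}.$$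
   Context: The Clifford algebra $Cl(V,f)$ is the unital associative $\mathbb{C}$-algebra generated by $V$ and $1$ subject to $v^2=f(v)\cdot1$ for $v\in V$. For a subspace $U\subseteq V$, $Cl(U,f)$ denotes the subalgebra generated by $1$ and $U$. $Cl(U,f)$ carries the natural $\mathbb{Z}/2\mathbb{Z}$-grading $Cl(U,f)=Cl(U,f)_{\bar0}+Cl(U,f)_{\bar1}$, where $Cl(U,f)_{\bar0}$ is spanned by all products of an even number of elements of $U$ (including the empty product $1$) and $Cl(U,f)_{\bar1}$ by all products of an odd number of elements of $U$. *)

theory Defs
  imports Complex_Main
begin

definition l2 :: "(nat \<Rightarrow> complex) set" where
  "l2 = {a. summable (\<lambda>i. (cmod (a i))\<^sup>2)}"

definition qf :: "(nat \<Rightarrow> complex) \<Rightarrow> complex" where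
  "qf a = (\<Sum>i. (a i)\<^sup>2)"

definition bf :: "(nat \<Rightarrow> complex) \<Rightarrow> (nat \<Rightarrow> complex) \<Rightarrow> complex" where
  "bf u v = qf (\<lambda>i. u i + v i) - qf u - qf v"

definition perp :: "(nat \<Rightarrow> complex) \<Rightarrow> (nat \<Rightarrow> complex) set" where
  "perp v = {w \<in> l2. bf v w = 0}"

definition smult_seq :: "complex \<Rightarrow> (nat \<Rightarrow> complex) \<Rightarrow> (nat \<Rightarrow> complex)" where
  "smult_seq c v = (\<lambda>i. c * v i)"

text \<open>Unit sequence with 1 in (0-based) position i; the paper's v_{i+1}.\<close>
definition unitseq :: "nat \<Rightarrow> (nat \<Rightarrow> complex)" where
  "unitseq i = (\<lambda>k. if k = i then 1 else 0)"

datatype cexp = Vec "nat \<Rightarrow> complex" | Scal complex | Add cexp cexp | Mul cexp cexp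

fun cl_wf :: "cexp \<Rightarrow> bool" where
  "cl_wf (Vec v) = (v \<in> l2)"
| "cl_wf (Scal c) = True"
| "cl_wf (Add x y) = (cl_wf x \<and> cl_wf y)"
| "cl_wf (Mul x y) = (cl_wf x \<and> cl_wf y)"

text \<open>The smallest congruence making the expressions a unital associative C-algebra
  (Scal c = c\<cdot>1, scalar multiplication c\<cdot>x = Mul (Scal c) x), in which Vec is linear on V
  and (Vec v)^2 = f(v)\<cdot>1 for v in V.  The quotient of the well-formed expressions is Cl(V,f).\<close>
inductive cl_rel :: "cexp \<Rightarrow> cexp \<Rightarrow> bool" where
  refl: "cl_rel x x"
| sym: "cl_rel x y \<Longrightarrow> cl_rel y x"
| trans: "cl_rel x y \<Longrightarrow> cl_rel y z \<Longrightarrow> cl_rel x z"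
| add_cong: "cl_rel x x' \<Longrightarrow> cl_rel y y' \<Longrightarrow> cl_rel (Add x y) (Add x' y')"
| mul_cong: "cl_rel x x' \<Longrightarrow> cl_rel y y' \<Longrightarrow> cl_rel (Mul x y) (Mul x' y')"
| add_assoc: "cl_rel (Add (Add x y) z) (Add x (Add y z))"
| add_comm: "cl_rel (Add x y) (Add y x)"
| add_zero: "cl_rel (Add x (Scal 0)) x"
| add_neg: "cl_rel (Add x (Mul (Scal (-1)) x)) (Scal 0)"
| mul_assoc: "cl_rel (Mul (Mul x y) z) (Mul x (Mul y z))"
| mul_one_l: "cl_rel (Mul (Scal 1) x) x"
| mul_one_r: "cl_rel (Mul x (Scal 1)) x"
| distrib_l: "cl_rel (Mul x (Add y z)) (Add (Mul x y) (Mul x z))"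
| distrib_r: "cl_rel (Mul (Add x y) z) (Add (Mul x z) (Mul y z))"
| scal_add: "cl_rel (Scal (a + b)) (Add (Scal a) (Scal b))"
| scal_mul: "cl_rel (Scal (a * b)) (Mul (Scal a) (Scal b))"
| scal_central: "cl_rel (Mul (Scal c) x) (Mul x (Scal c))"
| vec_add: "u \<in> l2 \<Longrightarrow> v \<in> l2 \<Longrightarrow> cl_rel (Vec (\<lambda>i. u i + v i)) (Add (Vec u) (Vec v))"
| vec_smult: "v \<in> l2 \<Longrightarrow> cl_rel (Vec (smult_seq c v)) (Mul (Scal c) (Vec v))"
| vec_sq: "v \<in> l2 \<Longrightarrow> cl_rel (Mul (Vec v) (Vec v)) (Scal (qf v))"

text \<open>The element of Cl(V,f) represented by an expression (its equivalence class).\<close>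
definition cl_class :: "cexp \<Rightarrow> cexp set" where
  "cl_class a = {b. cl_wf b \<and> cl_rel a b}"

definition cl_prod :: "(nat \<Rightarrow> complex) list \<Rightarrow> cexp" where
  "cl_prod ws = foldr (\<lambda>w acc. Mul (Vec w) acc) ws (Scal 1)"

text \<open>Representatives of Cl(U,f)_0: linear span of products of an even number of
  elements of U (the empty product being 1).\<close>
inductive_set cl_even :: "(nat \<Rightarrow> complex) set \<Rightarrow> cexp set" for U where
  scal: "Scal c \<in> cl_even U"
| prod: "set ws \<subseteq> U \<Longrightarrow> even (length ws) \<Longrightarrow> cl_prod ws \<in> cl_even U"
| add: "x \<in> cl_even U \<Longrightarrow> y \<in> cl_even U \<Longrightarrow> Add x y \<in> cl_even U"
| smul: "x \<in> cl_even U \<Longrightarrow> Mul (Scal c) x \<in> cl_even U"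

definition centralizer :: "(nat \<Rightarrow> complex) \<Rightarrow> cexp set" where
  "centralizer v = {a. cl_wf a \<and> cl_rel (Mul (Vec v) a) (Mul a (Vec v))}"

definition even_coset :: "cexp \<Rightarrow> (nat \<Rightarrow> complex) set \<Rightarrow> cexp set" where
  "even_coset x U = {Add (Mul x b) c | b c. b \<in> cl_even U \<and> c \<in> cl_even U}"

end

theory Submission
  imports Defs
begin

text \<open>
  Both parts are instances, for the lists [v] and [v_1, ..., v_n], of one statement about an
  orthonormal list ws of odd length, with P the product of its vectors and W its orthogonal
  complement. By induction along ws, an element commuting with all vectors of ws is x + P y
  with x in Cl(W)_0, and y in Cl(W)_0 or Cl(W)_1 according as the length of ws is odd or even.
  For the step from ws to ws @ [v], every element of Cl(U) with v in U splits as x0 + v x1 with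
  x0, x1 in Cl(U \<inter> v^\<perp>) of opposite parities (write w = w' + (f(v,w)/2) v with w' \<perp> v).
  Commuting with v then forces the odd element x1 to equal \<plusminus>P v y0, which is even. The grade
  involution, well defined because the defining relations of Cl(V,f) are homogeneous, shows that
  both vanish, and y0 = 0 because P v is invertible. Conversely, for odd length P commutes with
  every vector of ws.
\<close>

section \<open>The Clifford algebra as a quotient type\<close>

lemma cl_rel_equivp: "equivp cl_rel"
  by (rule equivpI) (auto simp: reflp_def symp_def transp_def intro: cl_rel.intros)

text \<open>Cl(V,f) is the part of cl represented by well-formed expressions.\<close>
quotient_type cl = cexp / cl_rel
  by (rule cl_rel_equivp)

instantiation cl :: "{ring, monoid_mult}"
begin
lift_definition zero_cl :: cl is "Scal 0" .
lift_definition one_cl :: cl is "Scal 1" .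
lift_definition plus_cl :: "cl \<Rightarrow> cl \<Rightarrow> cl" is Add by (rule cl_rel.add_cong)
lift_definition times_cl :: "cl \<Rightarrow> cl \<Rightarrow> cl" is Mul by (rule cl_rel.mul_cong)
lift_definition uminus_cl :: "cl \<Rightarrow> cl" is "\<lambda>x. Mul (Scal (-1)) x"
  by (auto intro: cl_rel.intros)
lift_definition minus_cl :: "cl \<Rightarrow> cl \<Rightarrow> cl" is "\<lambda>x y. Add x (Mul (Scal (-1)) y)"
  by (auto intro: cl_rel.intros)
instance
proof
  fix a b c :: cl
  show "a + b + c = a + (b + c)" by transfer (rule cl_rel.add_assoc)
  show "a + b = b + a" by transfer (rule cl_rel.add_comm)
  show "0 + a = a" by transfer (meson cl_rel.add_comm cl_rel.add_zero cl_rel.trans)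
  show "- a + a = 0" by transfer (meson cl_rel.add_comm cl_rel.add_neg cl_rel.trans)
  show "a - b = a + - b" by transfer (rule cl_rel.refl)
  show "a * b * c = a * (b * c)" by transfer (rule cl_rel.mul_assoc)
  show "(a + b) * c = a * c + b * c" by transfer (rule cl_rel.distrib_r)
  show "a * (b + c) = a * b + a * c" by transfer (rule cl_rel.distrib_l)
  show "1 * a = a" by transfer (rule cl_rel.mul_one_l)
  show "a * 1 = a" by transfer (rule cl_rel.mul_one_r)
qed
end

lift_definition sc :: "complex \<Rightarrow> cl" is Scal .
lift_definition vec :: "(nat \<Rightarrow> complex) \<Rightarrow> cl" is Vec .

lemma abs_cl_Add [simp]: "abs_cl (Add x y) = abs_cl x + abs_cl y"
  by (simp add: plus_cl.abs_eq)
lemma abs_cl_Mul [simp]: "abs_cl (Mul x y) = abs_cl x * abs_cl y"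
  by (simp add: times_cl.abs_eq)
lemma abs_cl_Scal [simp]: "abs_cl (Scal c) = sc c"
  by (simp add: sc.abs_eq)
lemma abs_cl_Vec [simp]: "abs_cl (Vec w) = vec w"
  by (simp add: vec.abs_eq)

lemma sc_add: "sc (a + b) = sc a + sc b"
  by transfer (rule cl_rel.scal_add)
lemma sc_mult: "sc (a * b) = sc a * sc b"
  by transfer (rule cl_rel.scal_mul)
lemma sc_0 [simp]: "sc 0 = 0"
  by transfer (rule cl_rel.refl)
lemma sc_1 [simp]: "sc 1 = 1"
  by transfer (rule cl_rel.refl)
lemma sc_commute: "sc c * x = x * sc c"
  by transfer (rule cl_rel.scal_central)
lemma sc_minus_one_mult [simp]: "sc (-1) * x = - x"
  by transfer (rule cl_rel.refl)
lemma sc_uminus: "sc (- c) = - sc c"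
  by (metis mult_minus1 sc_minus_one_mult sc_mult)
lemma sc_diff: "sc (a - b) = sc a - sc b"
  by (metis diff_conv_add_uminus sc_add sc_uminus)

lemma abs_cl_cl_prod: "abs_cl (cl_prod ws) = (\<Prod>w\<leftarrow>ws. vec w)"
  by (induction ws) (simp_all add: cl_prod_def)

lemma cl_add_self_eq_0: "(x::cl) + x = 0 \<Longrightarrow> x = 0"
proof -
  assume "x + x = 0"
  then have "sc (1/2) * (x + x) = 0" by simp
  then have "(sc (1/2) + sc (1/2)) * x = 0" by (simp add: algebra_simps)
  then show "x = 0" by (simp flip: sc_add)
qed

lemma l2_add:
  assumes "u \<in> l2" "w \<in> l2"
  shows "(\<lambda>i. u i + w i) \<in> l2"
proof -
  have "(cmod (u i + w i))\<^sup>2 \<le> 2 * (cmod (u i))\<^sup>2 + 2 * (cmod (w i))\<^sup>2" for i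
  proof -
    have "(cmod (u i + w i))\<^sup>2 \<le> (cmod (u i) + cmod (w i))\<^sup>2"
      by (simp add: norm_triangle_ineq power_mono)
    also have "\<dots> \<le> 2 * (cmod (u i))\<^sup>2 + 2 * (cmod (w i))\<^sup>2"
      using sum_squares_bound[of "cmod (u i)" "cmod (w i)"] by (simp add: power2_sum)
    finally show ?thesis .
  qed
  moreover have "summable (\<lambda>i. 2 * (cmod (u i))\<^sup>2 + 2 * (cmod (w i))\<^sup>2)"
    using assms unfolding l2_def by (intro summable_add summable_mult) auto
  ultimately show ?thesis
    unfolding l2_def by (auto intro: summable_comparison_test')
qed

lemma l2_smult:
  assumes "v \<in> l2"
  shows "(\<lambda>i. c * v i) \<in> l2"
proof -
  have "summable (\<lambda>i. (cmod c)\<^sup>2 * (cmod (v i))\<^sup>2)"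
    using assms unfolding l2_def by (intro summable_mult) auto
  then show ?thesis
    unfolding l2_def by (simp add: norm_mult power_mult_distrib)
qed

lemma l2_lincomb: "w \<in> l2 \<Longrightarrow> v \<in> l2 \<Longrightarrow> (\<lambda>i. w i + c * v i) \<in> l2"
  by (intro l2_add l2_smult)

lemma summable_l2_mult:
  assumes "u \<in> l2" "w \<in> l2"
  shows "summable (\<lambda>i. u i * w i)"
proof (rule summable_norm_cancel, rule summable_comparison_test')
  show "summable (\<lambda>i. (cmod (u i))\<^sup>2 + (cmod (w i))\<^sup>2)"
    using assms unfolding l2_def by (intro summable_add) auto
  show "norm (norm (u i * w i)) \<le> (cmod (u i))\<^sup>2 + (cmod (w i))\<^sup>2" for i
  proof -
    have "norm (norm (u i * w i)) = cmod (u i) * cmod (w i)" by (simp add: norm_mult)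
    moreover have "0 \<le> cmod (u i) * cmod (w i)" by simp
    ultimately show ?thesis using sum_squares_bound[of "cmod (u i)" "cmod (w i)"] by linarith
  qed
qed

lemma bf_eq_suminf:
  assumes "u \<in> l2" "w \<in> l2"
  shows "bf u w = 2 * (\<Sum>i. u i * w i)"
proof -
  have su: "summable (\<lambda>i. (u i)\<^sup>2)" and sw: "summable (\<lambda>i. (w i)\<^sup>2)"
    using summable_l2_mult[OF assms(1,1)] summable_l2_mult[OF assms(2,2)]
    by (simp_all add: power2_eq_square)
  have suw: "summable (\<lambda>i. u i * w i)"
    using assms by (rule summable_l2_mult)
  have "qf (\<lambda>i. u i + w i) = (\<Sum>i. (u i)\<^sup>2 + 2 * (u i * w i) + (w i)\<^sup>2)"
    unfolding qf_def by (simp add: power2_sum algebra_simps)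
  also have "\<dots> = qf u + 2 * (\<Sum>i. u i * w i) + qf w"
    unfolding qf_def using su sw suw
    by (simp add: suminf_add[symmetric] summable_add suminf_mult)
  finally show ?thesis unfolding bf_def by simp
qed

lemma bf_commute: "bf u w = bf w u"
  unfolding bf_def by (simp add: add.commute)

lemma bf_self: "v \<in> l2 \<Longrightarrow> bf v v = 2 * qf v"
  by (simp add: bf_eq_suminf qf_def power2_eq_square)

lemma bf_lincomb_right:
  assumes "u \<in> l2" "w \<in> l2" "v \<in> l2"
  shows "bf u (\<lambda>i. w i + c * v i) = bf u w + c * bf u v"
proof -
  have "(\<Sum>i. u i * (w i + c * v i)) = (\<Sum>i. u i * w i + c * (u i * v i))"
    by (simp add: algebra_simps)
  also have "\<dots> = (\<Sum>i. u i * w i) + c * (\<Sum>i. u i * v i)"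
    using summable_l2_mult[OF assms(1,2)] summable_l2_mult[OF assms(1,3)]
    by (simp add: suminf_add[symmetric] summable_mult suminf_mult)
  finally show ?thesis
    using assms l2_lincomb[OF assms(2,3)] by (simp add: bf_eq_suminf algebra_simps)
qed

lemma perp_subset_l2: "perp v \<subseteq> l2"
  by (auto simp: perp_def)

lemma perp_lincomb:
  assumes "u \<in> l2" "w \<in> perp u" "v \<in> perp u"
  shows "(\<lambda>i. w i + c * v i) \<in> perp u"
  using assms by (simp add: perp_def l2_lincomb bf_lincomb_right)

lemma unitseq_in_l2: "unitseq i \<in> l2"
proof -
  have "summable (\<lambda>k. (cmod (unitseq i k))\<^sup>2)"
    by (rule summable_finite[of "{i}"]) (auto simp: unitseq_def)
  then show ?thesis unfolding l2_def by simp
qed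

lemma qf_unitseq: "qf (unitseq i) = 1"
proof -
  have "(\<lambda>k. (unitseq i k)\<^sup>2) = (\<lambda>k. if k = i then 1 else 0)"
    by (auto simp: unitseq_def)
  then show ?thesis
    using sums_single[of i "\<lambda>_. 1::complex"] by (simp add: qf_def sums_iff)
qed

lemma bf_unitseq: "i \<noteq> j \<Longrightarrow> bf (unitseq i) (unitseq j) = 0"
proof -
  assume "i \<noteq> j"
  then have "(\<lambda>k. unitseq i k * unitseq j k) = (\<lambda>k. 0)" by (auto simp: unitseq_def)
  then show ?thesis by (simp add: bf_eq_suminf unitseq_in_l2)
qed

definition orthonormal :: "(nat \<Rightarrow> complex) list \<Rightarrow> bool" where
  "orthonormal ws \<longleftrightarrow> (\<forall>w\<in>set ws. w \<in> l2 \<and> qf w = 1) \<and> sorted_wrt (\<lambda>u w. bf u w = 0) ws"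

definition orth_compl :: "(nat \<Rightarrow> complex) list \<Rightarrow> (nat \<Rightarrow> complex) set" where
  "orth_compl ws = l2 \<inter> (\<Inter>w\<in>set ws. perp w)"

lemma orthonormal_snoc:
  "orthonormal (ws @ [v]) \<longleftrightarrow> orthonormal ws \<and> v \<in> l2 \<and> qf v = 1 \<and> set ws \<subseteq> perp v"
  unfolding orthonormal_def sorted_wrt_append perp_def by (auto simp: bf_commute[of v])

lemma orthonormal_unitseqs: "orthonormal (map unitseq [0..<n])"
  unfolding orthonormal_def
  by (auto simp: unitseq_in_l2 qf_unitseq sorted_wrt_map bf_unitseq
      intro: sorted_wrt_mono_rel[OF _ sorted_wrt_upt])

lemma orth_compl_Nil: "orth_compl [] = l2"
  by (simp add: orth_compl_def)

lemma orth_compl_snoc: "orth_compl (ws @ [v]) = orth_compl ws \<inter> perp v"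
  by (auto simp: orth_compl_def)

lemma orth_compl_subset_l2: "orth_compl ws \<subseteq> l2"
  by (simp add: orth_compl_def)

lemma orth_compl_subset_perp: "w \<in> set ws \<Longrightarrow> orth_compl ws \<subseteq> perp w"
  by (auto simp: orth_compl_def)

lemma orth_compl_eq_Inter_perp: "ws \<noteq> [] \<Longrightarrow> orth_compl ws = (\<Inter>w\<in>set ws. perp w)"
  using perp_subset_l2 by (fastforce simp: orth_compl_def neq_Nil_conv)

lemma orth_compl_lincomb:
  assumes "set ws \<subseteq> l2" "w \<in> orth_compl ws" "v \<in> orth_compl ws"
  shows "(\<lambda>i. w i + c * v i) \<in> orth_compl ws"
  using assms by (auto simp: orth_compl_def l2_lincomb intro: perp_lincomb)

lemma last_in_orth_compl: "orthonormal (ws @ [v]) \<Longrightarrow> v \<in> orth_compl ws"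
  by (auto simp: orthonormal_snoc orth_compl_def perp_def bf_commute[of v])

lemma vec_add: "u \<in> l2 \<Longrightarrow> w \<in> l2 \<Longrightarrow> vec (\<lambda>i. u i + w i) = vec u + vec w"
  by transfer (rule cl_rel.vec_add)

lemma vec_smult: "v \<in> l2 \<Longrightarrow> vec (smult_seq c v) = sc c * vec v"
  by transfer (rule cl_rel.vec_smult)

lemma vec_lincomb:
  assumes "w \<in> l2" "v \<in> l2"
  shows "vec (\<lambda>i. w i + c * v i) = vec w + sc c * vec v"
proof -
  have "smult_seq c v \<in> l2"
    unfolding smult_seq_def using assms(2) by (rule l2_smult)
  then show ?thesis
    using vec_add[OF assms(1)] vec_smult[OF assms(2)] by (simp add: smult_seq_def)
qed

lemma vec_sq: "v \<in> l2 \<Longrightarrow> vec v * vec v = sc (qf v)"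
  by transfer (rule cl_rel.vec_sq)

lemma vec_anticommute:
  assumes "u \<in> l2" "w \<in> l2"
  shows "vec u * vec w + vec w * vec u = sc (bf u w)"
proof -
  have "(vec u + vec w) * (vec u + vec w) = sc (qf (\<lambda>i. u i + w i))"
    using vec_lincomb[OF assms, of 1] vec_sq[OF l2_lincomb[OF assms, of 1]] by simp
  then have "sc (qf (\<lambda>i. u i + w i)) = sc (qf u) + sc (qf w) + (vec u * vec w + vec w * vec u)"
    using assms by (simp add: vec_sq algebra_simps)
  then show ?thesis
    by (simp add: bf_def sc_diff sc_add algebra_simps)
qed

lemma vec_perp_anticommute: "v \<in> l2 \<Longrightarrow> w \<in> perp v \<Longrightarrow> vec w * vec v = - (vec v * vec w)"
  using vec_anticommute[of v w] by (auto simp: perp_def eq_neg_iff_add_eq_0 add.commute)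

lemma perp_component:
  assumes "v \<in> l2" "qf v = 1" "w \<in> l2"
  defines "c \<equiv> bf v w / 2"
  shows "(\<lambda>i. w i + (- c) * v i) \<in> perp v"
    and "vec w = vec (\<lambda>i. w i + (- c) * v i) + sc c * vec v"
proof -
  have "bf v (\<lambda>i. w i + (- c) * v i) = 0"
    unfolding bf_lincomb_right[OF assms(1,3,1)] using assms(1,2) by (simp add: bf_self c_def)
  then show "(\<lambda>i. w i + (- c) * v i) \<in> perp v"
    using l2_lincomb[OF assms(3,1), of "- c"] by (simp add: perp_def)
  have "vec (\<lambda>i. w i + (- c) * v i) = vec w + sc (- c) * vec v"
    using assms(3,1) by (rule vec_lincomb)
  also have "sc (- c) * vec v = - (sc c * vec v)"
    by (simp add: sc_uminus)
  finally show "vec w = vec (\<lambda>i. w i + (- c) * v i) + sc c * vec v"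
    by simp
qed

section \<open>Homogeneous elements\<close>

text \<open>cl_homog U True and cl_homog U False are Cl(U,f)_0 and Cl(U,f)_1.\<close>
inductive cl_homog :: "(nat \<Rightarrow> complex) set \<Rightarrow> bool \<Rightarrow> cl \<Rightarrow> bool" for U where
  one: "cl_homog U True 1"
| vec_mult: "w \<in> U \<Longrightarrow> cl_homog U p x \<Longrightarrow> cl_homog U (\<not> p) (vec w * x)"
| zero: "cl_homog U p 0"
| add: "cl_homog U p x \<Longrightarrow> cl_homog U p y \<Longrightarrow> cl_homog U p (x + y)"
| scal: "cl_homog U p x \<Longrightarrow> cl_homog U p (sc c * x)"

lemma cl_homog_uminus: "cl_homog U p x \<Longrightarrow> cl_homog U p (- x)"
  using cl_homog.scal[of U p x "-1"] by simp

lemma cl_homog_diff: "cl_homog U p x \<Longrightarrow> cl_homog U p y \<Longrightarrow> cl_homog U p (x - y)"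
  unfolding diff_conv_add_uminus by (intro cl_homog.add cl_homog_uminus)

lemma cl_homog_vec: "w \<in> U \<Longrightarrow> cl_homog U False (vec w)"
  using cl_homog.vec_mult[OF _ cl_homog.one] by fastforce

lemma cl_homog_mono: "cl_homog U p x \<Longrightarrow> U \<subseteq> U' \<Longrightarrow> cl_homog U' p x"
  by (induction rule: cl_homog.induct) (auto intro: cl_homog.intros)

lemma cl_homog_mult: "cl_homog U p x \<Longrightarrow> cl_homog U q y \<Longrightarrow> cl_homog U (p = q) (x * y)"
proof (induction rule: cl_homog.induct)
  case (vec_mult w p x)
  then have "cl_homog U (\<not> (p = q)) (vec w * (x * y))" by (intro cl_homog.vec_mult)
  then show ?case by (cases q) (simp_all add: mult.assoc)
next
  case (add p x x')
  then show ?case by (simp add: distrib_right cl_homog.add)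
next
  case (scal p x c)
  then show ?case by (simp add: mult.assoc cl_homog.scal)
qed (simp_all add: cl_homog.zero)

lemma cl_homog_prod_list: "set ws \<subseteq> U \<Longrightarrow> cl_homog U (even (length ws)) (\<Prod>w\<leftarrow>ws. vec w)"
  by (induction ws) (auto intro: cl_homog.one dest: cl_homog.vec_mult)

lemma cl_homog_commute_vec:
  assumes "v \<in> l2" "U \<subseteq> perp v"
  shows "cl_homog U p x \<Longrightarrow> x * vec v = (if p then vec v * x else - (vec v * x))"
proof (induction rule: cl_homog.induct)
  case (vec_mult w p x)
  have "vec w * vec v = - (vec v * vec w)"
    using vec_mult.hyps assms by (auto intro: vec_perp_anticommute)
  then have anti: "vec w * (vec v * z) = - (vec v * (vec w * z))" for z
    by (metis mult.assoc mult_minus_left)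
  have "vec w * x * vec v = vec w * (x * vec v)"
    by (simp add: mult.assoc)
  also have "\<dots> = (if \<not> p then vec v * (vec w * x) else - (vec v * (vec w * x)))"
    using vec_mult.IH by (cases p) (simp_all add: anti)
  finally show ?case .
next
  case (scal p x c)
  then show ?case by (simp add: mult.assoc) (metis mult.assoc sc_commute mult_minus_right)
qed (simp_all add: algebra_simps)

lemma prod_list_vec_rev_mult:
  "\<forall>w\<in>set ws. w \<in> l2 \<and> qf w = 1 \<Longrightarrow> (\<Prod>w\<leftarrow>rev ws. vec w) * (\<Prod>w\<leftarrow>ws. vec w) = 1"
proof (induction ws)
  case (Cons w ws)
  then have "(\<Prod>w\<leftarrow>rev ws. vec w) * (vec w * vec w) * (\<Prod>w\<leftarrow>ws. vec w) = 1"
    by (simp add: vec_sq)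
  then show ?case by (simp add: mult.assoc)
qed simp

lemma prod_list_vec_mult_eq_0:
  "\<forall>w\<in>set ws. w \<in> l2 \<and> qf w = 1 \<Longrightarrow> (\<Prod>w\<leftarrow>ws. vec w) * y = 0 \<Longrightarrow> y = 0"
  by (metis prod_list_vec_rev_mult mult.assoc mult_1_left mult_zero_right)

lemma vec_commute_prod_list:
  assumes "orthonormal ws" "odd (length ws)" "v \<in> set ws"
  shows "vec v * (\<Prod>w\<leftarrow>ws. vec w) = (\<Prod>w\<leftarrow>ws. vec w) * vec v"
proof -
  obtain xs ys where ws: "ws = xs @ v # ys"
    using split_list[OF assms(3)] by blast
  have v: "v \<in> l2" "qf v = 1" and xs: "set xs \<subseteq> perp v" and ys: "set ys \<subseteq> perp v"
    using assms(1) unfolding ws orthonormal_def sorted_wrt_append perp_def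
    by (auto simp: bf_commute[of v])
  define A B where "A = (\<Prod>w\<leftarrow>xs. vec w)" and "B = (\<Prod>w\<leftarrow>ys. vec w)"
  have prod: "(\<Prod>w\<leftarrow>ws. vec w) = A * (vec v * B)"
    by (simp add: ws A_def B_def)
  have cA: "A * vec v = (if even (length xs) then vec v * A else - (vec v * A))"
    unfolding A_def by (rule cl_homog_commute_vec[OF v(1) order_refl cl_homog_prod_list[OF xs]])
  have cB: "B * vec v = (if even (length xs) then vec v * B else - (vec v * B))"
    using cl_homog_commute_vec[OF v(1) order_refl cl_homog_prod_list[OF ys]] assms(2)
    by (simp add: B_def ws)
  show ?thesis
  proof (cases "even (length xs)")
    case True
    then have "vec v * A = A * vec v" "B * vec v = vec v * B" using cA cB by simp_all
    then show ?thesis unfolding prod by (metis mult.assoc)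
  next
    case False
    then have "vec v * A = - (A * vec v)" "B * vec v = - (vec v * B)" using cA cB by simp_all
    then have "vec v * (A * (vec v * B)) = - (A * (vec v * vec v) * B)"
      and "A * (vec v * B) * vec v = - (A * (vec v * vec v) * B)"
      by (metis mult.assoc mult_minus_left mult_minus_right)+
    then show ?thesis unfolding prod by simp
  qed
qed

section \<open>The grade involution\<close>

fun grade_inv_exp :: "cexp \<Rightarrow> cexp" where
  "grade_inv_exp (Vec w) = Mul (Scal (-1)) (Vec w)"
| "grade_inv_exp (Scal c) = Scal c"
| "grade_inv_exp (Add x y) = Add (grade_inv_exp x) (grade_inv_exp y)"
| "grade_inv_exp (Mul x y) = Mul (grade_inv_exp x) (grade_inv_exp y)"

lemma grade_inv_exp_respects: "cl_rel x y \<Longrightarrow> cl_rel (grade_inv_exp x) (grade_inv_exp y)"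
proof -
  assume "cl_rel x y"
  then have "abs_cl (grade_inv_exp x) = abs_cl (grade_inv_exp y)"
  proof (induction rule: cl_rel.induct)
    case (scal_add a b) show ?case by (simp add: sc_add)
  next
    case (scal_mul a b) show ?case by (simp add: sc_mult)
  next
    case (scal_central c x) show ?case by (simp add: sc_commute)
  next
    case (vec_add u v) then show ?case by (simp add: Submission.vec_add)
  next
    case (vec_smult v c) then show ?case by (simp add: Submission.vec_smult)
  next
    case (vec_sq v) then show ?case by (simp add: Submission.vec_sq)
  qed (simp_all add: algebra_simps)
  then show ?thesis by (simp add: cl.abs_eq_iff)
qed

lift_definition grade_inv :: "cl \<Rightarrow> cl" is grade_inv_exp
  by (rule grade_inv_exp_respects)

lemma grade_inv_add [simp]: "grade_inv (x + y) = grade_inv x + grade_inv y"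
  by transfer (simp add: cl_rel.refl)
lemma grade_inv_mult [simp]: "grade_inv (x * y) = grade_inv x * grade_inv y"
  by transfer (simp add: cl_rel.refl)
lemma grade_inv_sc [simp]: "grade_inv (sc c) = sc c"
  by transfer (simp add: cl_rel.refl)
lemma grade_inv_vec [simp]: "grade_inv (vec w) = - vec w"
  by transfer (simp add: cl_rel.refl)

lemma grade_inv_0 [simp]: "grade_inv 0 = 0"
  using grade_inv_sc[of 0] by simp
lemma grade_inv_1 [simp]: "grade_inv 1 = 1"
  using grade_inv_sc[of 1] by simp

lemma cl_homog_grade_inv: "cl_homog U p x \<Longrightarrow> grade_inv x = (if p then x else - x)"
  by (induction rule: cl_homog.induct) auto

lemma cl_homog_even_eq_odd:
  assumes "cl_homog U True x" "cl_homog U False y" "x = y"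
  shows "x = 0"
proof -
  have "grade_inv x = x" "grade_inv x = - x"
    using cl_homog_grade_inv[OF assms(1)] cl_homog_grade_inv[OF assms(2)] assms(3) by simp_all
  then have "x + x = 0"
    by (metis add.right_inverse)
  then show ?thesis
    by (rule cl_add_self_eq_0)
qed

lemma cl_homog_split_unit_vector:
  assumes v: "v \<in> U" "qf v = 1" and U: "U \<subseteq> l2"
    and closed: "\<And>w c. w \<in> U \<Longrightarrow> (\<lambda>i. w i + c * v i) \<in> U"
  shows "cl_homog U p x \<Longrightarrow>
    \<exists>x0 x1. cl_homog (U \<inter> perp v) p x0 \<and> cl_homog (U \<inter> perp v) (\<not> p) x1 \<and> x = x0 + vec v * x1"
proof (induction rule: cl_homog.induct)
  case one
  show ?case
    by (intro exI[of _ 1] exI[of _ 0]) (simp add: cl_homog.one cl_homog.zero)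
next
  case (vec_mult w p x)
  then obtain x0 x1 where x0: "cl_homog (U \<inter> perp v) p x0" and x1: "cl_homog (U \<inter> perp v) (\<not> p) x1"
    and x: "x = x0 + vec v * x1"
    by blast
  have "v \<in> l2" "w \<in> l2" using v vec_mult.hyps U by auto
  define c where "c = bf v w / 2"
  define w' where "w' = (\<lambda>i. w i + (- c) * v i)"
  have w': "w' \<in> U \<inter> perp v"
    using closed[OF vec_mult.hyps(1), of "- c"] perp_component(1)[OF \<open>v \<in> l2\<close> v(2) \<open>w \<in> l2\<close>]
    by (simp add: w'_def c_def)
  have w: "vec w = vec w' + sc c * vec v"
    using perp_component(2)[OF \<open>v \<in> l2\<close> v(2) \<open>w \<in> l2\<close>] by (simp add: w'_def c_def)
  have "vec w' * (vec v * x1) = - (vec v * (vec w' * x1))"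
    using vec_perp_anticommute[OF \<open>v \<in> l2\<close>] w' by (simp flip: mult.assoc)
  moreover have "sc c * vec v * (vec v * x1) = sc c * x1"
    using vec_sq[OF \<open>v \<in> l2\<close>] v(2) by (metis mult.assoc mult_1_left sc_1)
  moreover have "sc c * vec v * x0 = vec v * (sc c * x0)"
    by (metis sc_commute mult.assoc)
  ultimately have "vec w * x = (vec w' * x0 + sc c * x1) + vec v * (sc c * x0 - vec w' * x1)"
    unfolding w x by (simp add: algebra_simps)
  moreover have "cl_homog (U \<inter> perp v) (\<not> p) (vec w' * x0 + sc c * x1)"
    using w' x0 x1 by (intro cl_homog.add cl_homog.vec_mult cl_homog.scal)
  moreover have "cl_homog (U \<inter> perp v) (\<not> \<not> p) (sc c * x0 - vec w' * x1)"
    using w' x0 x1 by (intro cl_homog_diff cl_homog.vec_mult cl_homog.scal) simp_all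
  ultimately show ?case by blast
next
  case (zero p)
  show ?case
    by (intro exI[of _ 0]) (simp add: cl_homog.zero)
next
  case (add p x y)
  then obtain x0 x1 y0 y1 where
    "cl_homog (U \<inter> perp v) p x0" "cl_homog (U \<inter> perp v) (\<not> p) x1" "x = x0 + vec v * x1"
    "cl_homog (U \<inter> perp v) p y0" "cl_homog (U \<inter> perp v) (\<not> p) y1" "y = y0 + vec v * y1"
    by blast
  then show ?case
    by (intro exI[of _ "x0 + y0"] exI[of _ "x1 + y1"]) (auto simp: algebra_simps intro: cl_homog.add)
next
  case (scal p x c)
  then obtain x0 x1 where
    "cl_homog (U \<inter> perp v) p x0" "cl_homog (U \<inter> perp v) (\<not> p) x1" "x = x0 + vec v * x1"
    by blast
  moreover have "sc c * (vec v * x1) = vec v * (sc c * x1)"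
    by (metis mult.assoc sc_commute)
  ultimately show ?case
    by (intro exI[of _ "sc c * x0"] exI[of _ "sc c * x1"]) (auto simp: algebra_simps intro: cl_homog.scal)
qed

lemma cl_wf_even_plus_odd:
  "cl_wf a \<Longrightarrow> \<exists>x y. cl_homog l2 True x \<and> cl_homog l2 False y \<and> abs_cl a = x + y"
proof (induction a)
  case (Vec w)
  then show ?case
    by (intro exI[of _ 0] exI[of _ "vec w"]) (simp add: cl_homog.zero cl_homog_vec)
next
  case (Scal c)
  have "cl_homog l2 True (sc c)"
    using cl_homog.scal[OF cl_homog.one, of l2 c] by simp
  then show ?case
    by (intro exI[of _ "sc c"] exI[of _ 0]) (simp add: cl_homog.zero)
next
  case (Add a b)
  then obtain x y x' y' where "cl_homog l2 True x" "cl_homog l2 False y" "abs_cl a = x + y"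
    "cl_homog l2 True x'" "cl_homog l2 False y'" "abs_cl b = x' + y'"
    by auto
  then show ?case
    by (intro exI[of _ "x + x'"] exI[of _ "y + y'"]) (auto simp: algebra_simps intro: cl_homog.add)
next
  case (Mul a b)
  then obtain x y x' y' where h: "cl_homog l2 True x" "cl_homog l2 False y" "abs_cl a = x + y"
    "cl_homog l2 True x'" "cl_homog l2 False y'" "abs_cl b = x' + y'"
    by auto
  have "cl_homog l2 True (x * x')" "cl_homog l2 True (y * y')"
    "cl_homog l2 False (x * y')" "cl_homog l2 False (y * x')"
    using cl_homog_mult[OF h(1,4)] cl_homog_mult[OF h(2,5)]
      cl_homog_mult[OF h(1,5)] cl_homog_mult[OF h(2,4)] by simp_all
  then have "cl_homog l2 True (x * x' + y * y')" "cl_homog l2 False (x * y' + y * x')"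
    by (simp_all add: cl_homog.add)
  moreover have "abs_cl (Mul a b) = (x * x' + y * y') + (x * y' + y * x')"
    using h by (simp add: algebra_simps)
  ultimately show ?case by blast
qed

inductive cl_homog_expr :: "(nat \<Rightarrow> complex) set \<Rightarrow> bool \<Rightarrow> cexp \<Rightarrow> bool" for U where
  zero: "cl_homog_expr U p (Scal 0)"
| prod: "set ws \<subseteq> U \<Longrightarrow> cl_homog_expr U (even (length ws)) (cl_prod ws)"
| add: "cl_homog_expr U p x \<Longrightarrow> cl_homog_expr U p y \<Longrightarrow> cl_homog_expr U p (Add x y)"
| scal: "cl_homog_expr U p x \<Longrightarrow> cl_homog_expr U p (Mul (Scal c) x)"

lemma cl_homog_expr_vec_mult:
  "cl_homog_expr U p e \<Longrightarrow> w \<in> U \<Longrightarrow>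
    \<exists>e'. cl_homog_expr U (\<not> p) e' \<and> abs_cl e' = vec w * abs_cl e"
proof (induction rule: cl_homog_expr.induct)
  case (zero p)
  show ?case
    by (intro exI[of _ "Scal 0"]) (simp_all add: cl_homog_expr.zero)
next
  case (prod ws)
  then have "cl_homog_expr U (\<not> even (length ws)) (cl_prod (w # ws))"
    using cl_homog_expr.prod[of "w # ws"] by simp
  then show ?case
    by (intro exI[of _ "cl_prod (w # ws)"]) (simp_all add: cl_prod_def)
next
  case (add p x y)
  then obtain a b where "cl_homog_expr U (\<not> p) a" "cl_homog_expr U (\<not> p) b"
    "abs_cl a = vec w * abs_cl x" "abs_cl b = vec w * abs_cl y"
    by blast
  then show ?case
    by (intro exI[of _ "Add a b"]) (simp_all add: algebra_simps cl_homog_expr.add)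
next
  case (scal p x c)
  then obtain a where "cl_homog_expr U (\<not> p) a" "abs_cl a = vec w * abs_cl x"
    by blast
  moreover have "sc c * (vec w * abs_cl x) = vec w * (sc c * abs_cl x)"
    by (metis mult.assoc sc_commute)
  ultimately show ?case
    by (intro exI[of _ "Mul (Scal c) a"]) (simp_all add: cl_homog_expr.scal)
qed

lemma cl_homog_imp_expr: "cl_homog U p x \<Longrightarrow> \<exists>e. cl_homog_expr U p e \<and> abs_cl e = x"
proof (induction rule: cl_homog.induct)
  case one
  show ?case
    using cl_homog_expr.prod[of "[]" U] by (force simp: cl_prod_def)
next
  case (vec_mult w p x)
  then obtain e where "cl_homog_expr U p e" "abs_cl e = x"
    by blast
  with cl_homog_expr_vec_mult[OF this(1) vec_mult.hyps(1)] show ?case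
    by auto
next
  case (zero p)
  show ?case
    by (intro exI[of _ "Scal 0"]) (simp_all add: cl_homog_expr.zero)
next
  case (add p x y)
  then obtain a b where "cl_homog_expr U p a" "abs_cl a = x" "cl_homog_expr U p b" "abs_cl b = y"
    by blast
  then show ?case
    by (intro exI[of _ "Add a b"]) (simp add: cl_homog_expr.add)
next
  case (scal p x c)
  then obtain a where "cl_homog_expr U p a" "abs_cl a = x"
    by blast
  then show ?case
    by (intro exI[of _ "Mul (Scal c) a"]) (simp add: cl_homog_expr.scal)
qed

lemma cl_homog_expr_even: "cl_homog_expr U p e \<Longrightarrow> p \<Longrightarrow> e \<in> cl_even U"
  by (induction rule: cl_homog_expr.induct) (auto intro: cl_even.intros)

lemma cl_even_imp_cl_homog: "e \<in> cl_even U \<Longrightarrow> cl_homog U True (abs_cl e)"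
proof (induction rule: cl_even.induct)
  case (scal c)
  show ?case
    using cl_homog.scal[OF cl_homog.one, of U c] by simp
next
  case (prod ws)
  then show ?case
    using cl_homog_prod_list[of ws U] by (simp add: abs_cl_cl_prod)
qed (auto intro: cl_homog.add cl_homog.scal)

lemma cl_homog_imp_cl_even: "cl_homog U True x \<Longrightarrow> \<exists>e \<in> cl_even U. abs_cl e = x"
  using cl_homog_imp_expr cl_homog_expr_even by blast

lemma cl_wf_cl_prod: "set ws \<subseteq> l2 \<Longrightarrow> cl_wf (cl_prod ws)"
  by (induction ws) (auto simp: cl_prod_def)

lemma cl_even_wf: "e \<in> cl_even U \<Longrightarrow> U \<subseteq> l2 \<Longrightarrow> cl_wf e"
  by (induction rule: cl_even.induct) (auto intro: cl_wf_cl_prod)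

section \<open>Centralizers of orthonormal lists\<close>

lemma commute_split_unit_vector:
  fixes v P x0 x1 y0 y1 :: cl
  assumes vv: "v * v = 1" and x0: "x0 * v = v * x0" and x1: "x1 * v = - (v * x1)"
    and P: "v * P = (if b then P * v else - (P * v))"
    and y0: "y0 * v = (if b then - (v * y0) else v * y0)"
    and y1: "y1 * v = (if b then v * y1 else - (v * y1))"
    and comm: "v * (x0 + v * x1 + P * (y0 + v * y1)) = (x0 + v * x1 + P * (y0 + v * y1)) * v"
  shows "x1 = (if b then - (P * v * y0) else P * v * y0)"
proof -
  have vv': "v * (v * z) = z" for z
    using vv by (simp flip: mult.assoc)
  have vP: "v * (P * z) = (if b then P * (v * z) else - (P * (v * z)))" for z
    using P by (cases b) (simp_all flip: mult.assoc)
  show ?thesis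
  proof (cases b)
    case True
    then have "v * x0 + x1 + P * (v * y0) + P * y1 = v * x0 - x1 - P * (v * y0) + P * y1"
      using comm by (simp add: algebra_simps vv' vP x0 x1 y0 y1)
    then have "(x1 + P * (v * y0)) + (x1 + P * (v * y0)) = 0"
      by (simp add: algebra_simps)
    then have "x1 + P * (v * y0) = 0"
      by (rule cl_add_self_eq_0)
    then show ?thesis
      using True by (simp add: mult.assoc eq_neg_iff_add_eq_0)
  next
    case False
    then have "v * x0 + x1 - P * (v * y0) - P * y1 = v * x0 - x1 + P * (v * y0) - P * y1"
      using comm by (simp add: algebra_simps vv' vP x0 x1 y0 y1)
    then have "(x1 - P * (v * y0)) + (x1 - P * (v * y0)) = 0"
      by (simp add: algebra_simps)
    then have "x1 - P * (v * y0) = 0"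
      by (rule cl_add_self_eq_0)
    then show ?thesis
      using False by (simp add: mult.assoc)
  qed
qed

lemma centralizer_split_step:
  assumes ON: "orthonormal (ws @ [v])"
    and x: "cl_homog (orth_compl ws) True x"
    and y: "cl_homog (orth_compl ws) (odd (length ws)) y"
    and comm: "vec v * (x + (\<Prod>w\<leftarrow>ws. vec w) * y) = (x + (\<Prod>w\<leftarrow>ws. vec w) * y) * vec v"
  shows "\<exists>x' y'. cl_homog (orth_compl (ws @ [v])) True x'
    \<and> cl_homog (orth_compl (ws @ [v])) (odd (length (ws @ [v]))) y'
    \<and> x + (\<Prod>w\<leftarrow>ws. vec w) * y = x' + (\<Prod>w\<leftarrow>ws @ [v]. vec w) * y'"
proof -
  define P where "P = (\<Prod>w\<leftarrow>ws. vec w)"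
  define W' where "W' = orth_compl (ws @ [v])"
  have v: "v \<in> l2" "qf v = 1" and ws_perp: "set ws \<subseteq> perp v"
    using ON by (simp_all add: orthonormal_snoc)
  have ws_l2: "set ws \<subseteq> l2"
    using ws_perp perp_subset_l2 by blast
  have split: "cl_homog (orth_compl ws) p z \<Longrightarrow>
      \<exists>z0 z1. cl_homog W' p z0 \<and> cl_homog W' (\<not> p) z1 \<and> z = z0 + vec v * z1" for p z
    using cl_homog_split_unit_vector[OF last_in_orth_compl[OF ON] v(2) orth_compl_subset_l2
        orth_compl_lincomb[OF ws_l2 _ last_in_orth_compl[OF ON]]]
    by (simp add: W'_def orth_compl_snoc)
  obtain x0 x1 where x0: "cl_homog W' True x0" and x1: "cl_homog W' False x1"
    and x_eq: "x = x0 + vec v * x1"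
    using split[OF x] by auto
  obtain y0 y1 where y0: "cl_homog W' (odd (length ws)) y0" and y1: "cl_homog W' (even (length ws)) y1"
    and y_eq: "y = y0 + vec v * y1"
    using split[OF y] by auto
  have commute_v: "cl_homog W' p z \<Longrightarrow> z * vec v = (if p then vec v * z else - (vec v * z))" for p z
    by (rule cl_homog_commute_vec[OF v(1)]) (auto simp: W'_def orth_compl_snoc)
  have P_homog: "cl_homog (perp v) (even (length ws)) P"
    unfolding P_def using ws_perp by (rule cl_homog_prod_list)
  have "vec v * P = (if even (length ws) then P * vec v else - (P * vec v))"
    using cl_homog_commute_vec[OF v(1) order_refl P_homog] by auto
  then have x1_eq: "x1 = (if even (length ws) then - (P * vec v * y0) else P * vec v * y0)"
    using vec_sq[OF v(1)] v(2) commute_v[OF x0] commute_v[OF x1] commute_v[OF y0] commute_v[OF y1]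
      comm unfolding x_eq y_eq P_def[symmetric]
    by (intro commute_split_unit_vector) simp_all
  have "W' \<subseteq> l2"
    by (simp add: W'_def orth_compl_subset_l2)
  have "cl_homog l2 True (P * vec v * y0)"
    using cl_homog_mult[OF cl_homog_mult[OF cl_homog_mono[OF P_homog perp_subset_l2] cl_homog_vec[OF v(1)]]
        cl_homog_mono[OF y0 \<open>W' \<subseteq> l2\<close>]]
    by simp
  then have "cl_homog l2 True (if even (length ws) then - (P * vec v * y0) else P * vec v * y0)"
    by (simp add: cl_homog_uminus)
  \<comment> \<open>x1 is odd while P v y0 is even\<close>
  from cl_homog_even_eq_odd[OF this cl_homog_mono[OF x1 \<open>W' \<subseteq> l2\<close>]] x1_eq
  have "x1 = 0" and "P * vec v * y0 = 0"
    by (auto split: if_splits)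
  have "(\<Prod>w\<leftarrow>ws @ [v]. vec w) * y0 = 0"
    using \<open>P * vec v * y0 = 0\<close> by (simp add: P_def mult.assoc)
  moreover have "\<forall>w\<in>set (ws @ [v]). w \<in> l2 \<and> qf w = 1"
    using ON by (simp add: orthonormal_def)
  ultimately have "y0 = 0"
    using prod_list_vec_mult_eq_0 by blast
  then have "x + P * y = x0 + (\<Prod>w\<leftarrow>ws @ [v]. vec w) * y1"
    using \<open>x1 = 0\<close> by (simp add: x_eq y_eq P_def mult.assoc)
  with x0 y1 show ?thesis
    unfolding W'_def P_def by auto
qed

lemma centralizer_split:
  assumes "orthonormal ws" "cl_wf a" "\<forall>w\<in>set ws. vec w * abs_cl a = abs_cl a * vec w"
  shows "\<exists>x y. cl_homog (orth_compl ws) True x \<and> cl_homog (orth_compl ws) (odd (length ws)) y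
    \<and> abs_cl a = x + (\<Prod>w\<leftarrow>ws. vec w) * y"
  using assms(1,3)
proof (induction ws rule: rev_induct)
  case Nil
  then show ?case
    using cl_wf_even_plus_odd[OF assms(2)] by (simp add: orth_compl_Nil)
next
  case (snoc v ws)
  then obtain x y where "cl_homog (orth_compl ws) True x" "cl_homog (orth_compl ws) (odd (length ws)) y"
    and "abs_cl a = x + (\<Prod>w\<leftarrow>ws. vec w) * y"
    by (auto simp: orthonormal_snoc)
  with centralizer_split_step[OF snoc.prems(1)] snoc.prems(2) show ?case
    by simp
qed

lemma cl_class_image_eq:
  assumes "abs_cl ` A = abs_cl ` B"
  shows "cl_class ` A = cl_class ` B"
proof -
  have class_eq: "cl_class a = cl_class b" if "abs_cl a = abs_cl b" for a b
  proof -
    have "cl_rel a = cl_rel b"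
      using cl_rel_equivp that by (simp add: equivp_def cl.abs_eq_iff)
    then show ?thesis
      by (simp add: cl_class_def)
  qed
  have image_mono: "cl_class ` A' \<subseteq> cl_class ` B'" if sub: "abs_cl ` A' \<subseteq> abs_cl ` B'" for A' B'
  proof
    fix C assume "C \<in> cl_class ` A'"
    then obtain a where "a \<in> A'" "C = cl_class a"
      by blast
    moreover have "abs_cl a \<in> abs_cl ` B'"
      using sub \<open>a \<in> A'\<close> by blast
    then obtain b where "b \<in> B'" "abs_cl a = abs_cl b"
      by auto
    ultimately show "C \<in> cl_class ` B'"
      using class_eq[of a b] by blast
  qed
  show ?thesis
    using image_mono[of A B] image_mono[of B A] assms by (simp add: subset_antisym)
qed

lemma centralizer_iff: "a \<in> centralizer v \<longleftrightarrow> cl_wf a \<and> vec v * abs_cl a = abs_cl a * vec v"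
  by (simp add: centralizer_def flip: cl.abs_eq_iff)

lemma abs_cl_even_coset:
  assumes "U \<subseteq> l2"
  shows "abs_cl ` even_coset P U
    = {abs_cl P * y + z | y z. cl_homog U True y \<and> cl_homog U True z}"
proof (intro equalityI subsetI)
  fix x assume "x \<in> abs_cl ` even_coset P U"
  then show "x \<in> {abs_cl P * y + z | y z. cl_homog U True y \<and> cl_homog U True z}"
    by (fastforce simp: even_coset_def dest: cl_even_imp_cl_homog)
next
  fix x assume "x \<in> {abs_cl P * y + z | y z. cl_homog U True y \<and> cl_homog U True z}"
  then obtain y z where "x = abs_cl P * y + z" "cl_homog U True y" "cl_homog U True z"
    by blast
  moreover obtain e1 e0 where "e1 \<in> cl_even U" "abs_cl e1 = y" "e0 \<in> cl_even U" "abs_cl e0 = z"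
    using cl_homog_imp_cl_even calculation(2,3) by metis
  ultimately show "x \<in> abs_cl ` even_coset P U"
    unfolding even_coset_def by (auto intro!: image_eqI[of _ _ "Add (Mul P e1) e0"])
qed

lemma cl_wf_even_coset: "b \<in> even_coset P U \<Longrightarrow> cl_wf P \<Longrightarrow> U \<subseteq> l2 \<Longrightarrow> cl_wf b"
  by (auto simp: even_coset_def intro: cl_even_wf)

lemma commute_even_coset:
  assumes ON: "orthonormal ws" and odd: "odd (length ws)" and "w \<in> set ws"
    and y: "cl_homog (orth_compl ws) True y" and z: "cl_homog (orth_compl ws) True z"
  shows "vec w * ((\<Prod>w\<leftarrow>ws. vec w) * y + z) = ((\<Prod>w\<leftarrow>ws. vec w) * y + z) * vec w"
proof -
  have "w \<in> l2"
    using ON \<open>w \<in> set ws\<close> by (simp add: orthonormal_def)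
  then have "vec w * y = y * vec w" "vec w * z = z * vec w"
    using cl_homog_commute_vec[OF _ orth_compl_subset_perp[OF \<open>w \<in> set ws\<close>]] y z by auto
  with vec_commute_prod_list[OF ON odd \<open>w \<in> set ws\<close>] show ?thesis
    by (simp add: algebra_simps) (metis mult.assoc)
qed

theorem centralizers_orthonormal_odd:
  assumes ON: "orthonormal ws" and odd: "odd (length ws)"
    and P: "cl_wf P" "abs_cl P = (\<Prod>w\<leftarrow>ws. vec w)"
  shows "cl_class ` (\<Inter>w\<in>set ws. centralizer w) = cl_class ` even_coset P (\<Inter>w\<in>set ws. perp w)"
proof -
  have "ws \<noteq> []"
    using odd by auto
  then have W: "(\<Inter>w\<in>set ws. perp w) = orth_compl ws"
    by (simp add: orth_compl_eq_Inter_perp)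
  have coset: "abs_cl ` even_coset P (orth_compl ws)
      = {(\<Prod>w\<leftarrow>ws. vec w) * y + z | y z. cl_homog (orth_compl ws) True y \<and> cl_homog (orth_compl ws) True z}"
    by (simp add: abs_cl_even_coset orth_compl_subset_l2 P(2))
  have "abs_cl ` (\<Inter>w\<in>set ws. centralizer w) = abs_cl ` even_coset P (orth_compl ws)"
  proof (intro equalityI subsetI)
    fix x assume "x \<in> abs_cl ` (\<Inter>w\<in>set ws. centralizer w)"
    then obtain a where a: "cl_wf a" "\<forall>w\<in>set ws. vec w * abs_cl a = abs_cl a * vec w"
      and "x = abs_cl a"
      using \<open>ws \<noteq> []\<close> by (auto simp: centralizer_iff neq_Nil_conv)
    with centralizer_split[OF ON a] odd show "x \<in> abs_cl ` even_coset P (orth_compl ws)"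
      unfolding coset by (auto simp: add.commute)
  next
    fix x assume "x \<in> abs_cl ` even_coset P (orth_compl ws)"
    then obtain b where "b \<in> even_coset P (orth_compl ws)" "x = abs_cl b"
      by blast
    moreover have "\<forall>w\<in>set ws. vec w * x = x * vec w"
      using \<open>x \<in> abs_cl ` even_coset P (orth_compl ws)\<close> commute_even_coset[OF ON odd]
      unfolding coset by blast
    ultimately show "x \<in> abs_cl ` (\<Inter>w\<in>set ws. centralizer w)"
      using cl_wf_even_coset P(1) orth_compl_subset_l2 by (auto simp: centralizer_iff)
  qed
  then show ?thesis
    unfolding W by (rule cl_class_image_eq)
qed

theorem lemma4:
  shows "(\<forall>v. v \<in> l2 \<and> qf v = 1 \<longrightarrow>
            cl_class ` centralizer v = cl_class ` even_coset (Vec v) (perp v))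
       \<and> (\<forall>n::nat. odd n \<longrightarrow>
            cl_class ` (\<Inter>i\<in>{0..<n}. centralizer (unitseq i))
            = cl_class ` even_coset (cl_prod (map unitseq [0..<n]))
                                    (\<Inter>i\<in>{0..<n}. perp (unitseq i)))"
proof (intro conjI allI impI)
  fix v assume "v \<in> l2 \<and> qf v = 1"
  then have "orthonormal [v]"
    by (simp add: orthonormal_def)
  from centralizers_orthonormal_odd[OF this, of "Vec v"] \<open>v \<in> l2 \<and> qf v = 1\<close>
  show "cl_class ` centralizer v = cl_class ` even_coset (Vec v) (perp v)"
    by simp
next
  fix n :: nat assume "odd n"
  have "cl_wf (cl_prod (map unitseq [0..<n]))"
    by (rule cl_wf_cl_prod) (auto simp: unitseq_in_l2)
  from centralizers_orthonormal_odd[OF orthonormal_unitseqs _ this abs_cl_cl_prod] \<open>odd n\<close>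
  show "cl_class ` (\<Inter>i\<in>{0..<n}. centralizer (unitseq i))
      = cl_class ` even_coset (cl_prod (map unitseq [0..<n])) (\<Inter>i\<in>{0..<n}. perp (unitseq i))"
    by (simp add: image_image)
qed

end
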